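(* Let $L_0$ be a set of locations shared between frames $\mathcal{F}_1$ and $\mathcal{F}_2$, with $\mathrm{LEFT}_0$, $C_{cut,0}$, $\mathrm{RIGHT}_2$ as defined below, and assume $\mathrm{lruns}_{C_{cut,0}}(\mathcal{F}_2)\subseteq\mathrm{lruns}_{C_{cut,0}}(\mathcal{F}_1)$. Let $C_s\subseteq\mathrm{LEFT}_0$, $C_o\subseteq\mathrm{RIGHT}_2$, and let $f$ be a function on sets of $C_s$-runs. If $\mathcal{F}_1$ $f$-limits $C_s$-to-$C_{cut,0}$ flow, then $\mathcal{F}_2$ $f$-limits $C_s$-to-$C_o$ flow.
   Context: A frame $\mathcal{F}$ consists of pairwise disjoint sets of locations $\mathcal{LO}$, channels $\mathcal{CH}$, data values $\mathcal{D}$. Each channel $c$ either has both a sender location $\mathrm{sender}(c)$ and a recipient location $\mathrm{recipient}(c)$ (possibly equal), or neither; the endpoint set $\mathrm{ends}(\ell)$ of a location records which channels it sends/receives on, and $\mathrm{chans}(\ell)=\{c:\mathrm{sender}(c)=\ell\text{ or }\mathrm{recipient}(c)=\ell\}$. Each location $\ell$ has a prefix-closed set $\mathrm{traces}(\ell)$ of finite or infinite sequences of labels $(c,v)$, $c\in\mathrm{chans}(\ell)$, $v\in\mathcal{D}$. Events are drawn from a common set $E$ with functions $\mathrm{chan}$ (to channels) and $\mathrm{msg}$ (to data). A system of events is $(B,\preceq)$, $B\subseteq E$, $\preceq$ a partial order with finitely many predecessors for each event; it is an execution of $\mathcal{F}$ ($\in\mathrm{exec}(\mathcal{F})$) iff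 for each location $\ell$ the events whose channel has $\ell$ as sender or recipient are linearly ordered and, as the sequence of labels $(\mathrm{chan}(e),\mathrm{msg}(e))$, form a member of $\mathrm{traces}(\ell)$. For $C$ a set of channels, $\mathcal{B}|_C$ keeps the events with channel in $C$ and the restricted order. $\mathrm{lruns}_C(\mathcal{F})$ is the set of $\mathcal{A}|_C$ for $\mathcal{A}\in\mathrm{exec}(\mathcal{F})$ ($C$-runs). $J_{C}^{C'}(\mathcal{B})$ computed in frame $\mathcal{F}_i$ is $\{\mathcal{A}|_{C'}:\mathcal{A}\in\mathrm{exec}(\mathcal{F}_i),\ \mathcal{A}|_C=\mathcal{B}\}$. A set $L_0$ is shared between $\mathcal{F}_1,\mathcal{F}_2$ (with locations $\mathcal{LO}_i$, channels $\mathcal{CH}_i$) iff $L_0\subseteq\mathcal{LO}_1\cap\mathcal{LO}_2$ and every $\ell\in L_0$ has the same channel endpoints and the same trace set in both frames. Then $\mathrm{LEFT}_0=\{c\in\mathcal{CH}_1:$ both endpoints of $c$ lie in $L_0\}$, $C_{cut,0}=\{c\in\mathcal{CH}_1:$ exactly one endpoint of $c$ lies in $L_0\}$, $\mathrm{RIGHT}_i=\{c\in\mathcal{CH}_i:$ neither endpoint lies in $L_0\}$. A blur operator is a function $f$ on sets with $S\subseteq f(S)$, $f(f(S))=f(S)$, and $f(\bigcup_{a\in I}S_a)=\bigcup_{a\in I}f(S_a)$ for all families; $S$ is $f$-blurred iff $f$ is a blur operator and $f(S)=S$. Frame $\mathcal{F}_i$ $f$-limits $C$-to-$C'$ flow iff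 $f$ is a blur operator and for every $C'$-run $\mathcal{B}$ of $\mathcal{F}_i$, $J_{C'}^{C}(\mathcal{B})$ (computed in $\mathcal{F}_i$) is $f$-blurred. *)

theory Defs
  imports Main
begin

(* A (finite or infinite) sequence of labels: an option-valued function on nat
   that, once undefined, stays undefined. *)
type_synonym ('c, 'd) lseq = "nat \<Rightarrow> ('c \<times> 'd) option"

definition is_seq :: "('c, 'd) lseq \<Rightarrow> bool" where
  "is_seq s \<longleftrightarrow> (\<forall>i. s i = None \<longrightarrow> s (Suc i) = None)"

definition trunc :: "nat \<Rightarrow> ('c, 'd) lseq \<Rightarrow> ('c, 'd) lseq" where
  "trunc n s = (\<lambda>i. if i < n then s i else None)"

(* Frames. Locations, channels, data live in distinct types, hence are disjoint.
   sndr c / rcpt c = None means "no sender / no recipient". *)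
record ('l, 'c, 'd) frame =
  LO :: "'l set"
  CH :: "'c set"
  DV :: "'d set"
  sndr :: "'c \<Rightarrow> 'l option"
  rcpt :: "'c \<Rightarrow> 'l option"
  trs :: "'l \<Rightarrow> ('c, 'd) lseq set"

definition chans :: "('l, 'c, 'd) frame \<Rightarrow> 'l \<Rightarrow> 'c set" where
  "chans F l = {c \<in> CH F. sndr F c = Some l \<or> rcpt F c = Some l}"

definition wf_frame :: "('l, 'c, 'd) frame \<Rightarrow> bool" where
  "wf_frame F \<longleftrightarrow>
     (\<forall>c \<in> CH F. (sndr F c = None \<longleftrightarrow> rcpt F c = None)) \<and>
     (\<forall>c \<in> CH F. \<forall>l. sndr F c = Some l \<longrightarrow> l \<in> LO F) \<and>
     (\<forall>c \<in> CH F. \<forall>l. rcpt F c = Some l \<longrightarrow> l \<in> LO F) \<and>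
     (\<forall>l \<in> LO F. \<forall>s \<in> trs F l. is_seq s \<and> (\<forall>n. trunc n s \<in> trs F l) \<and>
        (\<forall>i c v. s i = Some (c, v) \<longrightarrow> c \<in> chans F l \<and> v \<in> DV F))"

type_synonym 'e sys = "'e set \<times> ('e \<times> 'e) set"

definition is_system :: "'e sys \<Rightarrow> bool" where
  "is_system A \<longleftrightarrow> (let B = fst A; R = snd A in
     R \<subseteq> B \<times> B \<and> refl_on B R \<and> antisym R \<and> trans R \<and>
     (\<forall>e \<in> B. finite {e'. (e', e) \<in> R}))"

definition exec :: "('e \<Rightarrow> 'c) \<Rightarrow> ('e \<Rightarrow> 'd) \<Rightarrow> ('l, 'c, 'd) frame \<Rightarrow> 'e sys set" where
  "exec chan msg F = {A. is_system A \<and>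
     (\<forall>l \<in> LO F. let El = {e \<in> fst A. chan e \<in> chans F l} in
        (\<forall>e1 \<in> El. \<forall>e2 \<in> El. (e1, e2) \<in> snd A \<or> (e2, e1) \<in> snd A) \<and>
        (\<exists>s \<in> trs F l. \<exists>g. bij_betw g {i. s i \<noteq> None} El \<and>
           (\<forall>i \<in> {i. s i \<noteq> None}. \<forall>j \<in> {i. s i \<noteq> None}. i \<le> j \<longleftrightarrow> (g i, g j) \<in> snd A) \<and>
           (\<forall>i \<in> {i. s i \<noteq> None}. s i = Some (chan (g i), msg (g i)))))}"

definition restr :: "('e \<Rightarrow> 'c) \<Rightarrow> 'c set \<Rightarrow> 'e sys \<Rightarrow> 'e sys" where
  "restr chan C A = (let B' = {e \<in> fst A. chan e \<in> C} in (B', snd A \<inter> (B' \<times> B')))"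

definition lruns :: "('e \<Rightarrow> 'c) \<Rightarrow> ('e \<Rightarrow> 'd) \<Rightarrow> 'c set \<Rightarrow> ('l, 'c, 'd) frame \<Rightarrow> 'e sys set" where
  "lruns chan msg C F = restr chan C ` exec chan msg F"

definition J :: "('e \<Rightarrow> 'c) \<Rightarrow> ('e \<Rightarrow> 'd) \<Rightarrow> ('l, 'c, 'd) frame \<Rightarrow> 'c set \<Rightarrow> 'c set \<Rightarrow> 'e sys \<Rightarrow> 'e sys set" where
  "J chan msg F C C' B = {restr chan C' A | A. A \<in> exec chan msg F \<and> restr chan C A = B}"

definition shared :: "('l, 'c, 'd) frame \<Rightarrow> ('l, 'c, 'd) frame \<Rightarrow> 'l set \<Rightarrow> bool" where
  "shared F1 F2 L0 \<longleftrightarrow> L0 \<subseteq> LO F1 \<inter> LO F2 \<and>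
     (\<forall>l \<in> L0. {c \<in> CH F1. sndr F1 c = Some l} = {c \<in> CH F2. sndr F2 c = Some l} \<and>
               {c \<in> CH F1. rcpt F1 c = Some l} = {c \<in> CH F2. rcpt F2 c = Some l} \<and>
               trs F1 l = trs F2 l)"

definition in_L :: "'l option \<Rightarrow> 'l set \<Rightarrow> bool" where
  "in_L x L0 \<longleftrightarrow> (\<exists>l \<in> L0. x = Some l)"

definition LEFT :: "('l, 'c, 'd) frame \<Rightarrow> 'l set \<Rightarrow> 'c set" where
  "LEFT F L0 = {c \<in> CH F. in_L (sndr F c) L0 \<and> in_L (rcpt F c) L0}"

definition Ccut :: "('l, 'c, 'd) frame \<Rightarrow> 'l set \<Rightarrow> 'c set" where
  "Ccut F L0 = {c \<in> CH F. in_L (sndr F c) L0 \<noteq> in_L (rcpt F c) L0}"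

definition RIGHT :: "('l, 'c, 'd) frame \<Rightarrow> 'l set \<Rightarrow> 'c set" where
  "RIGHT F L0 = {c \<in> CH F. \<not> in_L (sndr F c) L0 \<and> \<not> in_L (rcpt F c) L0}"

definition blur_operator :: "('a set \<Rightarrow> 'a set) \<Rightarrow> bool" where
  "blur_operator f \<longleftrightarrow> (\<forall>S. S \<subseteq> f S) \<and> (\<forall>S. f (f S) = f S) \<and>
     (\<forall>(I :: 'a set set set) (Sf :: 'a set set \<Rightarrow> 'a set). f (\<Union>a\<in>I. Sf a) = (\<Union>a\<in>I. f (Sf a)))"

definition blurred :: "('a set \<Rightarrow> 'a set) \<Rightarrow> 'a set \<Rightarrow> bool" where
  "blurred f S \<longleftrightarrow> blur_operator f \<and> f S = S"

definition limits :: "('e \<Rightarrow> 'c) \<Rightarrow> ('e \<Rightarrow> 'd) \<Rightarrow> ('l, 'c, 'd) frame \<Rightarrow> ('e sys set \<Rightarrow> 'e sys set)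
    \<Rightarrow> 'c set \<Rightarrow> 'c set \<Rightarrow> bool" where
  "limits chan msg F f C C' \<longleftrightarrow> blur_operator f \<and>
     (\<forall>B \<in> lruns chan msg C' F. blurred f (J chan msg F C' C B))"

end

theory Submission
  imports Defs
begin

text \<open>
  Let \<open>K\<close> be the cut channels. A run of \<open>\<F>\<^sub>2\<close> and a run of \<open>\<F>\<^sub>1\<close> that agree on \<open>K\<close>
  can be spliced: keep the events of the first run on channels outside \<open>LEFT\<^sub>0\<close> and those
  of the second run on \<open>LEFT\<^sub>0 \<union> K\<close>, ordered by the union of the two orders composed with
  itself. As the two orders agree on the common events this is again a partial order, and
  each location sees only one of the two runs, so the splice is an execution of either
  frame. Hence, for a \<open>C\<^sub>o\<close>-run \<open>\<B>\<close> of \<open>\<F>\<^sub>2\<close>, the set of \<open>C\<^sub>s\<close>-runs compatible with \<open>\<B>\<close>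
  in \<open>\<F>\<^sub>2\<close> is the union, over the \<open>K\<close>-runs \<open>\<D>\<close> compatible with \<open>\<B>\<close> in \<open>\<F>\<^sub>2\<close>, of the sets
  of \<open>C\<^sub>s\<close>-runs compatible with \<open>\<D>\<close> in \<open>\<F>\<^sub>1\<close>. These are blurred by hypothesis, and a
  blur operator commutes with unions.
\<close>

definition compatible :: "'e sys \<Rightarrow> 'e sys \<Rightarrow> bool" where
  "compatible A A' \<longleftrightarrow>
     snd A \<inter> (fst A \<inter> fst A') \<times> (fst A \<inter> fst A') = snd A' \<inter> (fst A \<inter> fst A') \<times> (fst A \<inter> fst A')"

text \<open>
  A single composition suffices: since compatible orders agree on common events, a path that
  alternates between the two orders can be shortened to two steps (lemma \<open>glue_trans\<close>).
\<close>

definition glue :: "'e sys \<Rightarrow> 'e sys \<Rightarrow> 'e sys" where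
  "glue A A' = (fst A \<union> fst A', (snd A \<union> snd A') O (snd A \<union> snd A'))"

lemma compatible_sym: "compatible A A' \<longleftrightarrow> compatible A' A"
  unfolding compatible_def by (auto simp: Int_commute)

lemma glue_sym: "glue A A' = glue A' A"
  unfolding glue_def by (simp add: Un_commute)

lemma is_system_iff:
  "is_system (B, R) \<longleftrightarrow> R \<subseteq> B \<times> B \<and> refl_on B R \<and> antisym R \<and> trans R \<and>
     (\<forall>e \<in> B. finite {e'. (e', e) \<in> R})"
  unfolding is_system_def by simp

lemma is_system_finite_pred:
  assumes "is_system (B, R)"
  shows "finite {e'. (e', e) \<in> R}"
proof (cases "e \<in> B")
  case False
  then have "{e'. (e', e) \<in> R} = {}" using assms by (auto simp: is_system_iff)
  then show ?thesis by simp
qed (use assms in \<open>auto simp: is_system_iff\<close>)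

locale compatible_systems =
  fixes B1 B2 :: "'e set" and R1 R2 :: "'e rel"
  assumes sys1: "is_system (B1, R1)" and sys2: "is_system (B2, R2)"
    and compat: "compatible (B1, R1) (B2, R2)"
begin

lemma swap: "compatible_systems B2 B1 R2 R1"
  using sys1 sys2 compat by unfold_locales (simp_all add: compatible_sym)

lemma R1_field: "R1 \<subseteq> B1 \<times> B1" and R2_field: "R2 \<subseteq> B2 \<times> B2"
  and R1_trans: "trans R1" and R2_trans: "trans R2"
  using sys1 sys2 by (auto simp: is_system_iff)

lemma common_step:
  "x \<in> B1 \<Longrightarrow> x \<in> B2 \<Longrightarrow> y \<in> B1 \<Longrightarrow> y \<in> B2 \<Longrightarrow> (x, y) \<in> R1 \<longleftrightarrow> (x, y) \<in> R2"
  using compat unfolding compatible_def by auto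

lemma step_within_left: "(x, y) \<in> R1 \<union> R2 \<Longrightarrow> x \<in> B1 \<Longrightarrow> y \<in> B1 \<Longrightarrow> (x, y) \<in> R1"
  using R2_field common_step by auto

lemma glue_restrict_left: "snd (glue (B1, R1) (B2, R2)) \<inter> B1 \<times> B1 = R1"
proof
  have "refl_on B1 R1" using sys1 by (auto simp: is_system_iff)
  then show "R1 \<subseteq> snd (glue (B1, R1) (B2, R2)) \<inter> B1 \<times> B1"
    using R1_field unfolding glue_def refl_on_def by auto
next
  show "snd (glue (B1, R1) (B2, R2)) \<inter> B1 \<times> B1 \<subseteq> R1"
  proof clarify
    fix a b assume "(a, b) \<in> snd (glue (B1, R1) (B2, R2))" and ab: "a \<in> B1" "b \<in> B1"
    then obtain k where ak: "(a, k) \<in> R1 \<union> R2" and kb: "(k, b) \<in> R1 \<union> R2"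
      unfolding glue_def by auto
    show "(a, b) \<in> R1"
    proof (cases "k \<in> B1")
      case True
      then show ?thesis
        using step_within_left[OF ak] step_within_left[OF kb] ab R1_trans by (meson transE)
    next
      case False
      then have "(a, k) \<in> R2" "(k, b) \<in> R2" using ak kb R1_field by auto
      then show ?thesis using step_within_left ab R2_trans by (meson UnI2 transE)
    qed
  qed
qed

lemma glue_restrict_right: "snd (glue (B1, R1) (B2, R2)) \<inter> B2 \<times> B2 = R2"
  using compatible_systems.glue_restrict_left[OF swap] by (simp add: glue_sym)

lemma glue_path_from_left:
  assumes "(a, x) \<in> R1" "(x, y) \<in> R1 \<union> R2" "(y, c) \<in> R1 \<union> R2"
  shows "(a, c) \<in> snd (glue (B1, R1) (B2, R2))"
proof (cases "y \<in> B1")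
  case True
  then have "(a, y) \<in> R1"
    using assms R1_field step_within_left R1_trans by (meson SigmaD2 subsetD transE)
  then show ?thesis using assms(3) unfolding glue_def by auto
next
  case False
  then have "(x, c) \<in> R2" using assms(2,3) R1_field R2_trans by (auto dest: transD)
  then show ?thesis using assms(1) unfolding glue_def by auto
qed

lemma glue_trans: "trans (snd (glue (B1, R1) (B2, R2)))"
proof -
  let ?S = "R1 \<union> R2"
  have from_left: "(a, c) \<in> ?S O ?S" if "(a, x) \<in> R1" "(x, y) \<in> ?S" "(y, c) \<in> ?S" for a x y c
    using glue_path_from_left[OF that] unfolding glue_def by simp
  have from_right: "(a, c) \<in> ?S O ?S" if "(a, x) \<in> R2" "(x, y) \<in> R2 \<union> R1" "(y, c) \<in> R2 \<union> R1"
    for a x y c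
    using compatible_systems.glue_path_from_left[OF swap that] unfolding glue_def
    by (simp add: Un_commute)
  have three: "(a, c) \<in> ?S O ?S" if "(a, x) \<in> ?S" "(x, y) \<in> ?S" "(y, c) \<in> ?S" for a x y c
    using that(1) from_left[OF _ that(2,3)] from_right[of a x y c] that(2,3)
    by (auto simp: Un_commute)
  show ?thesis unfolding glue_def snd_conv
  proof (rule transI)
    fix a b c assume "(a, b) \<in> ?S O ?S" "(b, c) \<in> ?S O ?S"
    then show "(a, c) \<in> ?S O ?S" using three by blast
  qed
qed

lemma glue_crossing:
  assumes "(a, b) \<in> snd (glue (B1, R1) (B2, R2))" "a \<notin> B2" "b \<notin> B1"
  obtains k where "(a, k) \<in> R1" "(k, b) \<in> R2"
  using assms R1_field R2_field unfolding glue_def by auto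

lemma glue_no_crossing_cycle:
  assumes ab: "(a, b) \<in> snd (glue (B1, R1) (B2, R2))"
    and ba: "(b, a) \<in> snd (glue (B1, R1) (B2, R2))"
    and "a \<notin> B2" "b \<notin> B1"
  shows False
proof -
  obtain k where ak: "(a, k) \<in> R1" and kb: "(k, b) \<in> R2"
    using glue_crossing[OF ab] assms by blast
  obtain k' where bk': "(b, k') \<in> R2" and k'a: "(k', a) \<in> R1"
    using compatible_systems.glue_crossing[OF swap, of b a] ba assms by (auto simp: glue_sym)
  have "(k, k') \<in> R2" using kb bk' R2_trans by (meson transE)
  moreover have "k \<in> B1 \<inter> B2" "k' \<in> B1 \<inter> B2" using ak kb bk' k'a R1_field R2_field by auto
  ultimately have "(k, k') \<in> R1" using common_step by auto
  then have "(k, a) \<in> R1" using k'a R1_trans by (meson transE)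
  moreover have "antisym R1" using sys1 by (simp add: is_system_iff)
  ultimately have "k = a" using ak by (meson antisymD)
  then show False using \<open>a \<notin> B2\<close> \<open>k \<in> B1 \<inter> B2\<close> by simp
qed

lemma glue_antisym: "antisym (snd (glue (B1, R1) (B2, R2)))"
proof (rule antisymI)
  fix a b
  assume ab: "(a, b) \<in> snd (glue (B1, R1) (B2, R2))" and ba: "(b, a) \<in> snd (glue (B1, R1) (B2, R2))"
  have "a \<in> B1 \<union> B2" "b \<in> B1 \<union> B2" using ab R1_field R2_field unfolding glue_def by auto
  then consider "a \<in> B1" "b \<in> B1" | "a \<in> B2" "b \<in> B2" | "a \<notin> B2" "b \<notin> B1" | "b \<notin> B2" "a \<notin> B1"
    by blast
  then show "a = b"
  proof cases
    case 1
    then have "(a, b) \<in> R1" "(b, a) \<in> R1" using ab ba glue_restrict_left by blast+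
    then show ?thesis using sys1 by (auto simp: is_system_iff dest: antisymD)
  next
    case 2
    then have "(a, b) \<in> R2" "(b, a) \<in> R2" using ab ba glue_restrict_right by blast+
    then show ?thesis using sys2 by (auto simp: is_system_iff dest: antisymD)
  qed (use glue_no_crossing_cycle ab ba in blast)+
qed

lemma glue_finite_pred: "finite {e'. (e', e) \<in> snd (glue (B1, R1) (B2, R2))}"
proof -
  let ?pred = "\<lambda>x. {e'. (e', x) \<in> R1 \<union> R2}"
  have fin: "finite (?pred x)" for x
    using is_system_finite_pred[OF sys1] is_system_finite_pred[OF sys2]
    by (simp add: Collect_disj_eq)
  have "{e'. (e', e) \<in> snd (glue (B1, R1) (B2, R2))} = (\<Union>k \<in> ?pred e. ?pred k)"
    unfolding glue_def by auto
  then show ?thesis using fin by simp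
qed

lemma is_system_glue: "is_system (glue (B1, R1) (B2, R2))"
proof -
  have "refl_on B1 R1" "refl_on B2 R2" using sys1 sys2 by (auto simp: is_system_iff)
  then have "refl_on (B1 \<union> B2) (snd (glue (B1, R1) (B2, R2)))"
    unfolding glue_def refl_on_def by auto
  moreover have "snd (glue (B1, R1) (B2, R2)) \<subseteq> (B1 \<union> B2) \<times> (B1 \<union> B2)"
    using R1_field R2_field unfolding glue_def by auto
  ultimately show ?thesis
    using glue_antisym glue_trans glue_finite_pred unfolding is_system_def glue_def by auto
qed

end

lemma glue_restrict_left:
  assumes "is_system A" "is_system A'" "compatible A A'"
  shows "snd (glue A A') \<inter> fst A \<times> fst A = snd A"
  using compatible_systems.glue_restrict_left[of "fst A" "fst A'" "snd A" "snd A'"] assms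
  by (simp add: compatible_systems_def)

lemma is_system_glue:
  assumes "is_system A" "is_system A'" "compatible A A'"
  shows "is_system (glue A A')"
  using compatible_systems.is_system_glue[of "fst A" "fst A'" "snd A" "snd A'"] assms
  by (simp add: compatible_systems_def)

lemma restr_restr: "restr chan C (restr chan C' A) = restr chan (C \<inter> C') A"
  unfolding restr_def Let_def by auto

lemma is_system_restr:
  assumes "is_system A"
  shows "is_system (restr chan C A)"
proof -
  obtain B R where A: "A = (B, R)" by fastforce
  let ?B' = "{e \<in> B. chan e \<in> C}"
  have sys: "R \<subseteq> B \<times> B" "refl_on B R" "antisym R" "trans R"
    using assms A by (simp_all add: is_system_iff)
  have "finite {e'. (e', e) \<in> R \<inter> ?B' \<times> ?B'}" for e
    using is_system_finite_pred[of B R e] assms A by (auto intro: finite_subset)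
  moreover have "refl_on ?B' (R \<inter> ?B' \<times> ?B')" using sys(2) by (auto simp: refl_on_def)
  ultimately show ?thesis
    using antisym_Restr[OF sys(3)] trans_Restr[OF sys(4)]
    unfolding A restr_def Let_def is_system_iff fst_conv snd_conv by blast
qed

lemma restr_glue:
  assumes "is_system A" "is_system A'" "compatible A A'" "{e \<in> fst A'. chan e \<in> C} \<subseteq> fst A"
  shows "restr chan C (glue A A') = restr chan C A"
proof -
  let ?E = "{e \<in> fst A. chan e \<in> C}"
  have events: "{e \<in> fst (glue A A'). chan e \<in> C} = ?E"
    using assms(4) unfolding glue_def by auto
  have "snd (glue A A') \<inter> ?E \<times> ?E = snd A \<inter> ?E \<times> ?E"
    using glue_restrict_left[OF assms(1-3)] by blast
  then show ?thesis unfolding restr_def Let_def events by simp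
qed

lemma glue_restr:
  fixes chan :: "'e \<Rightarrow> 'c"
  assumes X: "is_system X" and Y: "is_system Y"
    and common: "restr chan (C1 \<inter> C2) X = restr chan (C1 \<inter> C2) Y"
  defines "G \<equiv> glue (restr chan C1 X) (restr chan C2 Y)"
  shows "is_system G" and "restr chan C1 G = restr chan C1 X"
    and "restr chan C2 G = restr chan C2 Y"
proof -
  let ?X1 = "restr chan C1 X" and ?Y2 = "restr chan C2 Y"
  have events: "{e \<in> fst X. chan e \<in> C1 \<inter> C2} = {e \<in> fst Y. chan e \<in> C1 \<inter> C2}"
    and order: "snd X \<inter> {e \<in> fst X. chan e \<in> C1 \<inter> C2} \<times> {e \<in> fst X. chan e \<in> C1 \<inter> C2}
      = snd Y \<inter> {e \<in> fst Y. chan e \<in> C1 \<inter> C2} \<times> {e \<in> fst Y. chan e \<in> C1 \<inter> C2}"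
    using common unfolding restr_def Let_def by auto
  have compat: "compatible ?X1 ?Y2"
    using events order unfolding compatible_def restr_def Let_def by auto
  have sys: "is_system ?X1" "is_system ?Y2" using X Y by (simp_all add: is_system_restr)
  show "is_system G" unfolding G_def using is_system_glue[OF sys compat] .
  have "restr chan C1 G = restr chan C1 ?X1"
    unfolding G_def using events by (intro restr_glue[OF sys compat]) (auto simp: restr_def Let_def)
  then show "restr chan C1 G = restr chan C1 X" by (simp add: restr_restr)
  have "restr chan C2 G = restr chan C2 ?Y2"
    unfolding G_def glue_sym[of ?X1] using events compat
    by (intro restr_glue[OF sys(2,1)]) (auto simp: restr_def Let_def compatible_sym)
  then show "restr chan C2 G = restr chan C2 Y" by (simp add: restr_restr)
qed

definition follows_trace ::
    "('e \<Rightarrow> 'c) \<Rightarrow> ('e \<Rightarrow> 'd) \<Rightarrow> ('c, 'd) lseq set \<Rightarrow> 'c set \<Rightarrow> 'e sys \<Rightarrow> bool" where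
  "follows_trace chan msg T C A = (let E = {e \<in> fst A. chan e \<in> C} in
     (\<forall>e1 \<in> E. \<forall>e2 \<in> E. (e1, e2) \<in> snd A \<or> (e2, e1) \<in> snd A) \<and>
     (\<exists>s \<in> T. \<exists>g. bij_betw g {i. s i \<noteq> None} E \<and>
        (\<forall>i \<in> {i. s i \<noteq> None}. \<forall>j \<in> {i. s i \<noteq> None}. i \<le> j \<longleftrightarrow> (g i, g j) \<in> snd A) \<and>
        (\<forall>i \<in> {i. s i \<noteq> None}. s i = Some (chan (g i), msg (g i)))))"

lemma exec_iff_follows_trace:
  "A \<in> exec chan msg F \<longleftrightarrow>
     is_system A \<and> (\<forall>l \<in> LO F. follows_trace chan msg (trs F l) (chans F l) A)"
  unfolding exec_def follows_trace_def by simp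

lemma follows_trace_cong:
  assumes events: "{e \<in> fst A. chan e \<in> C} = {e \<in> fst A'. chan e \<in> C}"
    and order: "\<And>x y. x \<in> {e \<in> fst A. chan e \<in> C} \<Longrightarrow> y \<in> {e \<in> fst A. chan e \<in> C} \<Longrightarrow>
                  (x, y) \<in> snd A \<longleftrightarrow> (x, y) \<in> snd A'"
  shows "follows_trace chan msg T C A = follows_trace chan msg T C A'"
proof -
  let ?E = "{e \<in> fst A. chan e \<in> C}"
  have linear: "(\<forall>e1 \<in> ?E. \<forall>e2 \<in> ?E. (e1, e2) \<in> snd A \<or> (e2, e1) \<in> snd A) \<longleftrightarrow>
      (\<forall>e1 \<in> ?E. \<forall>e2 \<in> ?E. (e1, e2) \<in> snd A' \<or> (e2, e1) \<in> snd A')"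
    using order by blast
  have monotone: "bij_betw g I ?E \<Longrightarrow>
      (\<forall>i \<in> I. \<forall>j \<in> I. i \<le> j \<longleftrightarrow> (g i, g j) \<in> snd A) \<longleftrightarrow>
      (\<forall>i \<in> I. \<forall>j \<in> I. i \<le> j \<longleftrightarrow> (g i, g j) \<in> snd A')" for g and I :: "nat set"
    using order bij_betw_apply[of g I ?E] by blast
  show ?thesis
    unfolding follows_trace_def Let_def events[symmetric] linear
    by (intro conj_cong[OF refl] bex_cong[OF refl] ex_cong1) (simp only: monotone)
qed

lemma follows_trace_restr:
  assumes "C \<subseteq> C'"
  shows "follows_trace chan msg T C (restr chan C' A) = follows_trace chan msg T C A"
  using assms by (intro follows_trace_cong) (auto simp: restr_def Let_def)

lemma shared_sym: "shared F1 F2 L0 \<longleftrightarrow> shared F2 F1 L0"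
  unfolding shared_def by auto

lemma shared_chans: "shared F1 F2 L0 \<Longrightarrow> l \<in> L0 \<Longrightarrow> chans F1 l = chans F2 l"
  unfolding shared_def chans_def by blast

lemma shared_LEFT: "shared F1 F2 L0 \<Longrightarrow> LEFT F1 L0 = LEFT F2 L0"
  unfolding shared_def LEFT_def in_L_def by blast

lemma shared_Ccut_subset: "shared F1 F2 L0 \<Longrightarrow> Ccut F1 L0 \<subseteq> Ccut F2 L0"
  unfolding shared_def Ccut_def in_L_def by blast

lemma shared_Ccut: "shared F1 F2 L0 \<Longrightarrow> Ccut F1 L0 = Ccut F2 L0"
  using shared_Ccut_subset shared_sym by blast

lemma chans_subset_LEFT_Ccut: "l \<in> L0 \<Longrightarrow> chans F l \<subseteq> LEFT F L0 \<union> Ccut F L0"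
  unfolding chans_def LEFT_def Ccut_def in_L_def by auto

lemma chans_disjoint_LEFT: "l \<notin> L0 \<Longrightarrow> chans F l \<inter> LEFT F L0 = {}"
  unfolding chans_def LEFT_def in_L_def by auto

lemma LEFT_disjoint_Ccut: "LEFT F L0 \<inter> Ccut F L0 = {}"
  unfolding LEFT_def Ccut_def by auto

lemma RIGHT_disjoint_LEFT: "RIGHT F L0 \<inter> LEFT F L0 = {}"
  unfolding RIGHT_def LEFT_def by auto

lemma exec_glue:
  assumes shared: "shared F' F L0" and X: "X \<in> exec chan msg F'" and Y: "Y \<in> exec chan msg F"
    and cut: "restr chan (Ccut F L0) X = restr chan (Ccut F L0) Y"
  obtains G where "G \<in> exec chan msg F"
    and "restr chan (LEFT F L0 \<union> Ccut F L0) G = restr chan (LEFT F L0 \<union> Ccut F L0) X"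
    and "restr chan (- LEFT F L0) G = restr chan (- LEFT F L0) Y"
proof -
  let ?C1 = "LEFT F L0 \<union> Ccut F L0" and ?C2 = "- LEFT F L0"
  let ?G = "glue (restr chan ?C1 X) (restr chan ?C2 Y)"
  have "?C1 \<inter> ?C2 = Ccut F L0" using LEFT_disjoint_Ccut[of F L0] by blast
  then have common: "restr chan (?C1 \<inter> ?C2) X = restr chan (?C1 \<inter> ?C2) Y" using cut by simp
  have "is_system X" "is_system Y" using X Y by (simp_all add: exec_iff_follows_trace)
  note G = glue_restr[OF this common]
  have "follows_trace chan msg (trs F l) (chans F l) ?G" if l: "l \<in> LO F" for l
  proof (cases "l \<in> L0")
    case True
    have C1: "chans F l \<subseteq> ?C1" using True by (rule chans_subset_LEFT_Ccut)
    have "l \<in> LO F'" "trs F' l = trs F l" using shared True unfolding shared_def by auto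
    moreover have "chans F' l = chans F l" using shared True by (rule shared_chans)
    ultimately have "follows_trace chan msg (trs F l) (chans F l) X"
      using X unfolding exec_iff_follows_trace by metis
    then show ?thesis
      using follows_trace_restr[OF C1, of chan msg _ ?G] follows_trace_restr[OF C1, of chan msg _ X]
        G(2)
      by simp
  next
    case False
    then have C2: "chans F l \<subseteq> ?C2" using chans_disjoint_LEFT[of l L0 F] by blast
    have "follows_trace chan msg (trs F l) (chans F l) Y"
      using Y l by (auto simp: exec_iff_follows_trace)
    then show ?thesis
      using follows_trace_restr[OF C2, of chan msg _ ?G] follows_trace_restr[OF C2, of chan msg _ Y]
        G(3)
      by simp
  qed
  then have "?G \<in> exec chan msg F" using G(1) by (simp add: exec_iff_follows_trace)
  then show thesis using G(2,3) by (rule that)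
qed

lemma restr_eq_subset:
  "C \<subseteq> C' \<Longrightarrow> restr chan C' X = restr chan C' Y \<Longrightarrow> restr chan C X = restr chan C Y"
  by (metis inf.absorb1 restr_restr)

lemma J_subset_lruns: "J chan msg F C C' B \<subseteq> lruns chan msg C' F"
  unfolding J_def lruns_def by blast

lemma J_decompose:
  assumes shared: "shared F1 F2 L0"
    and cut_runs: "lruns chan msg (Ccut F1 L0) F2 \<subseteq> lruns chan msg (Ccut F1 L0) F1"
    and Cs: "Cs \<subseteq> LEFT F1 L0" and Co: "Co \<inter> LEFT F1 L0 = {}"
  shows "J chan msg F2 Co Cs B =
    \<Union>(J chan msg F1 (Ccut F1 L0) Cs ` J chan msg F2 Co (Ccut F1 L0) B)"
proof
  let ?K = "Ccut F1 L0"
  show "J chan msg F2 Co Cs B \<subseteq> \<Union>(J chan msg F1 ?K Cs ` J chan msg F2 Co ?K B)"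
  proof
    fix Z assume "Z \<in> J chan msg F2 Co Cs B"
    then obtain A where A: "A \<in> exec chan msg F2" "restr chan Co A = B" "Z = restr chan Cs A"
      unfolding J_def by blast
    then have "restr chan ?K A \<in> lruns chan msg ?K F1" using cut_runs unfolding lruns_def by blast
    then obtain A' where A': "A' \<in> exec chan msg F1" "restr chan ?K A = restr chan ?K A'"
      unfolding lruns_def by auto
    obtain G where G: "G \<in> exec chan msg F1"
      "restr chan (LEFT F1 L0 \<union> ?K) G = restr chan (LEFT F1 L0 \<union> ?K) A"
      using exec_glue[OF shared[THEN shared_sym[THEN iffD1]] A(1) A'] by blast
    have "restr chan ?K G = restr chan ?K A" "restr chan Cs G = Z"
      using restr_eq_subset[OF _ G(2)] Cs A(3) by auto
    then have "Z \<in> J chan msg F1 ?K Cs (restr chan ?K A)" using G(1) unfolding J_def by blast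
    moreover have "restr chan ?K A \<in> J chan msg F2 Co ?K B" using A unfolding J_def by blast
    ultimately show "Z \<in> \<Union>(J chan msg F1 ?K Cs ` J chan msg F2 Co ?K B)" by blast
  qed
  show "\<Union>(J chan msg F1 ?K Cs ` J chan msg F2 Co ?K B) \<subseteq> J chan msg F2 Co Cs B"
  proof
    fix Z assume "Z \<in> \<Union>(J chan msg F1 ?K Cs ` J chan msg F2 Co ?K B)"
    then obtain A A' where A: "A \<in> exec chan msg F2" "restr chan Co A = B"
      and A': "A' \<in> exec chan msg F1" "restr chan ?K A' = restr chan ?K A" "Z = restr chan Cs A'"
      unfolding J_def by blast
    have LEFT: "LEFT F1 L0 = LEFT F2 L0" and Ccut: "?K = Ccut F2 L0"
      using shared by (rule shared_LEFT, rule shared_Ccut)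
    obtain G where G: "G \<in> exec chan msg F2"
      "restr chan (LEFT F1 L0 \<union> ?K) G = restr chan (LEFT F1 L0 \<union> ?K) A'"
      "restr chan (- LEFT F1 L0) G = restr chan (- LEFT F1 L0) A"
      using exec_glue[OF shared A'(1) A(1)] A'(2) unfolding LEFT Ccut by blast
    have "restr chan Cs G = Z" "restr chan Co G = B"
      using restr_eq_subset[OF _ G(2)] restr_eq_subset[OF _ G(3)] Cs Co A(2) A'(3) by auto
    then show "Z \<in> J chan msg F2 Co Cs B" using G(1) unfolding J_def by blast
  qed
qed

lemma blur_operator_Union:
  assumes "blur_operator f"
  shows "f (\<Union>\<S>) = \<Union>(f ` \<S>)"
proof -
  \<comment> \<open>\<open>blur_operator_def\<close> only speaks of families indexed by sets of sets; index by singletons.\<close>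
  have "f (\<Union>a \<in> (\<lambda>S. {S}) ` \<S>. \<Union>a) = (\<Union>a \<in> (\<lambda>S. {S}) ` \<S>. f (\<Union>a))"
    using assms unfolding blur_operator_def by blast
  then show ?thesis by simp
qed

lemma blurred_Union:
  assumes "blur_operator f" and "\<And>S. S \<in> \<S> \<Longrightarrow> blurred f S"
  shows "blurred f (\<Union>\<S>)"
  using assms blur_operator_Union[OF assms(1)] unfolding blurred_def by simp

theorem theorem3:
  fixes chan :: "'e \<Rightarrow> 'c" and msg :: "'e \<Rightarrow> 'd"
    and F1 F2 :: "('l, 'c, 'd) frame" and L0 :: "'l set"
    and Cs Co :: "'c set" and f :: "'e sys set \<Rightarrow> 'e sys set"
  assumes "wf_frame F1" and "wf_frame F2"
    and "shared F1 F2 L0"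
    and "lruns chan msg (Ccut F1 L0) F2 \<subseteq> lruns chan msg (Ccut F1 L0) F1"
    and "Cs \<subseteq> LEFT F1 L0" and "Co \<subseteq> RIGHT F2 L0"
    and "limits chan msg F1 f Cs (Ccut F1 L0)"
  shows "limits chan msg F2 f Cs Co"
  unfolding limits_def
proof (intro conjI ballI)
  let ?K = "Ccut F1 L0"
  have blur: "blur_operator f"
    and lim: "\<And>D. D \<in> lruns chan msg ?K F1 \<Longrightarrow> blurred f (J chan msg F1 ?K Cs D)"
    using assms(7) unfolding limits_def by auto
  show "blur_operator f" by (rule blur)
  fix B
  have "Co \<inter> LEFT F1 L0 = {}"
    using assms(6) RIGHT_disjoint_LEFT[of F2 L0] shared_LEFT[OF assms(3)] by blast
  then have decompose: "J chan msg F2 Co Cs B = \<Union>(J chan msg F1 ?K Cs ` J chan msg F2 Co ?K B)"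
    by (rule J_decompose[OF assms(3,4,5)])
  have "J chan msg F2 Co ?K B \<subseteq> lruns chan msg ?K F1"
    using J_subset_lruns assms(4) by blast
  then show "blurred f (J chan msg F2 Co Cs B)"
    unfolding decompose using lim by (intro blurred_Union[OF blur]) auto
qed

end
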